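(* Let $R$ be a bounded principal ideal domain. Then a nonzero non-unit $a\in R$ is c-irreducible if and only if it is irreducible. Equivalently, a nonzero left ideal of $R$ is completely prime if and only if it is a maximal left ideal.
   Context: A principal ideal domain (PID) is a (not necessarily commutative) domain in which every left ideal and every right ideal is principal. An element $p$ is bounded if $Rp$ contains a nonzero two-sided ideal; the PID $R$ is bounded if every nonzero non-unit of $R$ is bounded. A non-unit $a$ is irreducible if $a=bc$ implies $b$ or $c$ is a unit. Elements $b,c$ are similar if $R/Rb\cong R/Rc$ as left $R$-modules. A nonzero $a$ is c-reducible if $a=bb'=c'c$ for some non-units $b,b',c',c$ with $b$ similar to $c$; otherwise c-irreducible. A left ideal $\mathfrak{p}$ is completely prime if $\mathfrak{p}\neq R$ and $ab\in\mathfrak{p}$, $\mathfrak{p}b\subseteq\mathfrak{p}$ imply $a\in\mathfrak{p}$ or $b\in\mathfrak{p}$. *)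

theory Defs
  imports Main
begin

text \<open>The ring R is the ambient type 'a :: ring_1_no_zero_divisors, i.e. a
(not necessarily commutative) domain.\<close>

definition nc_unit :: "'a::ring_1 \<Rightarrow> bool" where
  "nc_unit a \<longleftrightarrow> (\<exists>b. a * b = 1 \<and> b * a = 1)"

definition left_ideal :: "'a::ring_1 set \<Rightarrow> bool" where
  "left_ideal I \<longleftrightarrow> 0 \<in> I \<and> (\<forall>x\<in>I. \<forall>y\<in>I. x + y \<in> I) \<and> (\<forall>x\<in>I. - x \<in> I)
     \<and> (\<forall>r. \<forall>x\<in>I. r * x \<in> I)"

definition right_ideal :: "'a::ring_1 set \<Rightarrow> bool" where
  "right_ideal I \<longleftrightarrow> 0 \<in> I \<and> (\<forall>x\<in>I. \<forall>y\<in>I. x + y \<in> I) \<and> (\<forall>x\<in>I. - x \<in> I)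
     \<and> (\<forall>r. \<forall>x\<in>I. x * r \<in> I)"

definition two_sided_ideal :: "'a::ring_1 set \<Rightarrow> bool" where
  "two_sided_ideal I \<longleftrightarrow> left_ideal I \<and> right_ideal I"

definition lprinc :: "'a::ring_1 \<Rightarrow> 'a set" where
  "lprinc a = {r * a | r. True}"

definition rprinc :: "'a::ring_1 \<Rightarrow> 'a set" where
  "rprinc a = {a * r | r. True}"

definition is_PID :: "'a::ring_1_no_zero_divisors itself \<Rightarrow> bool" where
  "is_PID _ \<longleftrightarrow> (\<forall>I::'a set. left_ideal I \<longrightarrow> (\<exists>a. I = lprinc a))
              \<and> (\<forall>I::'a set. right_ideal I \<longrightarrow> (\<exists>a. I = rprinc a))"

definition bounded_elem :: "'a::ring_1 \<Rightarrow> bool" where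
  "bounded_elem p \<longleftrightarrow> (\<exists>I. two_sided_ideal I \<and> I \<noteq> {0} \<and> I \<subseteq> lprinc p)"

definition bounded_PID :: "'a::ring_1_no_zero_divisors itself \<Rightarrow> bool" where
  "bounded_PID T \<longleftrightarrow> is_PID T \<and>
     (\<forall>a::'a. a \<noteq> 0 \<and> \<not> nc_unit a \<longrightarrow> bounded_elem a)"

definition nc_irreducible :: "'a::ring_1 \<Rightarrow> bool" where
  "nc_irreducible a \<longleftrightarrow> \<not> nc_unit a \<and> (\<forall>b c. a = b * c \<longrightarrow> nc_unit b \<or> nc_unit c)"

text \<open>Cosets x + Rb, the elements of the left module R/Rb.\<close>
definition lcoset :: "'a::ring_1 \<Rightarrow> 'a \<Rightarrow> 'a set" where
  "lcoset b x = {x + y | y. y \<in> lprinc b}"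

text \<open>b and c are similar: R/Rb and R/Rc are isomorphic as left R-modules,
  i.e. there is a bijection of the coset sets that is additive and R-linear.\<close>
definition similar :: "'a::ring_1 \<Rightarrow> 'a \<Rightarrow> bool" where
  "similar b c \<longleftrightarrow> (\<exists>\<phi> :: 'a set \<Rightarrow> 'a set.
     bij_betw \<phi> (range (lcoset b)) (range (lcoset c)) \<and>
     (\<forall>x y u v. \<phi> (lcoset b x) = lcoset c u \<longrightarrow> \<phi> (lcoset b y) = lcoset c v \<longrightarrow>
        \<phi> (lcoset b (x + y)) = lcoset c (u + v)) \<and>
     (\<forall>r x u. \<phi> (lcoset b x) = lcoset c u \<longrightarrow> \<phi> (lcoset b (r * x)) = lcoset c (r * u)))"

definition c_reducible :: "'a::ring_1 \<Rightarrow> bool" where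
  "c_reducible a \<longleftrightarrow> a \<noteq> 0 \<and> (\<exists>b b' c' c. \<not> nc_unit b \<and> \<not> nc_unit b' \<and> \<not> nc_unit c' \<and>
      \<not> nc_unit c \<and> a = b * b' \<and> a = c' * c \<and> similar b c)"

definition c_irreducible :: "'a::ring_1 \<Rightarrow> bool" where
  "c_irreducible a \<longleftrightarrow> a \<noteq> 0 \<and> \<not> c_reducible a"

definition completely_prime :: "'a::ring_1 set \<Rightarrow> bool" where
  "completely_prime P \<longleftrightarrow> P \<noteq> UNIV \<and>
     (\<forall>a b. a * b \<in> P \<and> {x * b | x. x \<in> P} \<subseteq> P \<longrightarrow> a \<in> P \<or> b \<in> P)"

definition maximal_left_ideal :: "'a::ring_1 set \<Rightarrow> bool" where
  "maximal_left_ideal M \<longleftrightarrow> left_ideal M \<and> M \<noteq> UNIV \<and>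
     (\<forall>J. left_ideal J \<and> M \<subseteq> J \<longrightarrow> J = M \<or> J = UNIV)"

end

(* If a = xy with x, y non-units, then Ra \<subset> Ry \<subset> R, so R/Ra has a simple top factor R/L
   (L maximal above Ry) and a simple submodule T/Ra of Ry/Ra. In a bounded PID the annihilators of
   these simple modules are nonzero two-sided ideals, generated by invariant elements q and p.
   Fitting's lemma for p and q either splits R/Ra into a nontrivial direct sum, or shows that powers
   of p and q kill R/Ra; since annihilators of simple modules are prime, the two annihilators then
   coincide and R/L \<cong> T/Ra. Either way some class v' in R/Ra generates a proper nonzero submodule
   whose annihilator strictly contains Ra. Writing Rv' = Rd/Ra \<cong> R/Re and Rv' \<cong> R/Rb gives
   a = ed = c'b with e similar to b, so a is c-reducible, and v' also witnesses that Ra is not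
   completely prime. Conversely, irreducible elements are c-irreducible, Ra is maximal for
   irreducible a, and maximal left ideals are completely prime. *)

theory Submission
  imports Defs "HOL-Library.Set_Algebras"
begin

section \<open>Left and right ideals\<close>

lemma mem_lprinc: "x \<in> lprinc a \<longleftrightarrow> (\<exists>r. x = r * a)"
  by (auto simp: lprinc_def)

lemma mem_rprinc: "x \<in> rprinc a \<longleftrightarrow> (\<exists>r. x = a * r)"
  by (auto simp: rprinc_def)

lemma mult_mem_lprinc [simp]: "r * a \<in> lprinc a"
  by (auto simp: mem_lprinc)

lemma mult_mem_rprinc [simp]: "a * r \<in> rprinc a"
  by (auto simp: mem_rprinc)

lemma lprinc_self [simp]: "(a::'a::ring_1) \<in> lprinc a"
  using mult_mem_lprinc[of 1 a] by simp

lemma rprinc_self [simp]: "(a::'a::ring_1) \<in> rprinc a"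
  using mult_mem_rprinc[of a 1] by simp

lemma lprinc_0 [simp]: "lprinc (0::'a::ring_1) = {0}"
  by (auto simp: mem_lprinc)

lemma left_idealI:
  assumes "0 \<in> I" and "\<And>x y. x \<in> I \<Longrightarrow> y \<in> I \<Longrightarrow> x + y \<in> I"
    and "\<And>x. x \<in> I \<Longrightarrow> - x \<in> I" and "\<And>r x. x \<in> I \<Longrightarrow> r * x \<in> I"
  shows "left_ideal I"
  using assms unfolding left_ideal_def by blast

lemma right_idealI:
  assumes "0 \<in> I" and "\<And>x y. x \<in> I \<Longrightarrow> y \<in> I \<Longrightarrow> x + y \<in> I"
    and "\<And>x. x \<in> I \<Longrightarrow> - x \<in> I" and "\<And>r x. x \<in> I \<Longrightarrow> x * r \<in> I"
  shows "right_ideal I"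
  using assms unfolding right_ideal_def by blast

lemma
  assumes "left_ideal I"
  shows left_ideal_zero: "0 \<in> I"
    and left_ideal_add: "x \<in> I \<Longrightarrow> y \<in> I \<Longrightarrow> x + y \<in> I"
    and left_ideal_uminus: "x \<in> I \<Longrightarrow> - x \<in> I"
    and left_ideal_mult: "x \<in> I \<Longrightarrow> r * x \<in> I"
  using assms unfolding left_ideal_def by blast+

lemma
  assumes "right_ideal I"
  shows right_ideal_zero: "0 \<in> I"
    and right_ideal_add: "x \<in> I \<Longrightarrow> y \<in> I \<Longrightarrow> x + y \<in> I"
    and right_ideal_uminus: "x \<in> I \<Longrightarrow> - x \<in> I"
    and right_ideal_mult: "x \<in> I \<Longrightarrow> x * r \<in> I"
  using assms unfolding right_ideal_def by blast+

lemma left_ideal_diff: "left_ideal I \<Longrightarrow> x \<in> I \<Longrightarrow> y \<in> I \<Longrightarrow> x - y \<in> I"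
  by (metis diff_conv_add_uminus left_ideal_add left_ideal_uminus)

lemma left_ideal_eq_UNIV: "left_ideal I \<Longrightarrow> 1 \<in> I \<Longrightarrow> I = UNIV"
  by (metis UNIV_eq_I left_ideal_mult mult.right_neutral)

lemma left_ideal_UNIV: "left_ideal (UNIV :: 'a::ring_1 set)"
  by (simp add: left_ideal_def)

lemma lprinc_eq_range: "lprinc a = range (\<lambda>r. r * a)"
  by (auto simp: lprinc_def)

lemma rprinc_eq_range: "rprinc a = range (\<lambda>r. a * r)"
  by (auto simp: rprinc_def)

lemma right_ideal_rprinc: "right_ideal (rprinc a)"
proof (rule right_idealI)
  show "0 \<in> rprinc a" using mult_mem_rprinc[of a 0] by simp
  show "x + y \<in> rprinc a" if "x \<in> rprinc a" "y \<in> rprinc a" for x y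
    using that by (metis mem_rprinc distrib_left)
  show "- x \<in> rprinc a" if "x \<in> rprinc a" for x
    using that by (metis mem_rprinc minus_mult_right)
  show "x * r \<in> rprinc a" if "x \<in> rprinc a" for x r
    using that by (metis mem_rprinc mult.assoc)
qed

lemma lprinc_least: "left_ideal I \<Longrightarrow> a \<in> I \<Longrightarrow> lprinc a \<subseteq> I"
  by (auto simp: mem_lprinc intro: left_ideal_mult)

lemma rprinc_least: "right_ideal I \<Longrightarrow> a \<in> I \<Longrightarrow> rprinc a \<subseteq> I"
  by (auto simp: mem_rprinc intro: right_ideal_mult)

lemma left_ideal_Int: "left_ideal I \<Longrightarrow> left_ideal J \<Longrightarrow> left_ideal (I \<inter> J)"
  by (simp add: left_ideal_def)

lemma left_ideal_INT: "(\<And>i. i \<in> A \<Longrightarrow> left_ideal (I i)) \<Longrightarrow> left_ideal (\<Inter>i\<in>A. I i)"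
  by (simp add: left_ideal_def)

lemma left_ideal_vimage_rmult: "left_ideal I \<Longrightarrow> left_ideal {r. r * v \<in> I}"
  by (rule left_idealI) (simp_all add: left_ideal_zero left_ideal_add left_ideal_uminus
      left_ideal_mult distrib_right mult.assoc)

lemma left_ideal_image_rmult:
  assumes "left_ideal I"
  shows "left_ideal ((\<lambda>x. x * t) ` I)"
proof (rule left_idealI)
  show "0 \<in> (\<lambda>x. x * t) ` I"
    using image_eqI[of 0 "\<lambda>x. x * t" 0] left_ideal_zero[OF assms] by simp
  show "- x \<in> (\<lambda>x. x * t) ` I" if "x \<in> (\<lambda>x. x * t) ` I" for x
    using that by (auto intro!: image_eqI[of _ _ "- _"] left_ideal_uminus[OF assms])
qed (auto simp flip: distrib_right mult.assoc intro!: imageI left_ideal_add[OF assms] left_ideal_mult[OF assms])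

lemma left_ideal_lprinc: "left_ideal (lprinc a)"
  unfolding lprinc_eq_range by (rule left_ideal_image_rmult[OF left_ideal_UNIV])

lemma left_ideal_plus: "left_ideal I \<Longrightarrow> left_ideal J \<Longrightarrow> left_ideal (I + J)"
proof (rule left_idealI)
  assume I: "left_ideal I" and J: "left_ideal J"
  show "0 \<in> I + J"
    using set_plus_intro[OF left_ideal_zero[OF I] left_ideal_zero[OF J]] by simp
  show "x + y \<in> I + J" if "x \<in> I + J" "y \<in> I + J" for x y
  proof -
    obtain a b a' b' where "a \<in> I" "b \<in> J" "a' \<in> I" "b' \<in> J" "x + y = (a + a') + (b + b')"
      using \<open>x \<in> I + J\<close> \<open>y \<in> I + J\<close> by (auto elim!: set_plus_elim simp: add_ac)
    then show ?thesis by (simp add: set_plus_intro left_ideal_add[OF I] left_ideal_add[OF J])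
  qed
  show "- x \<in> I + J" if "x \<in> I + J" for x
    using that by (auto elim!: set_plus_elim intro!: set_plus_intro[of "- _" I "- _", simplified]
        left_ideal_uminus[OF I] left_ideal_uminus[OF J])
  show "r * x \<in> I + J" if "x \<in> I + J" for r x
    using that by (auto elim!: set_plus_elim simp: distrib_left
        intro!: left_ideal_mult[OF I] left_ideal_mult[OF J])
qed

lemma left_ideal_UN_mono:
  fixes I :: "nat \<Rightarrow> 'a::ring_1 set"
  assumes "mono I" and "\<And>i. left_ideal (I i)"
  shows "left_ideal (\<Union>i. I i)"
proof (rule left_idealI)
  fix x y assume "x \<in> (\<Union>i. I i)" "y \<in> (\<Union>i. I i)"
  then obtain i j where "x \<in> I i" "y \<in> I j" by blast
  then have "x \<in> I (max i j)" "y \<in> I (max i j)"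
    using monoD[OF assms(1), of i "max i j"] monoD[OF assms(1), of j "max i j"] by auto
  then show "x + y \<in> (\<Union>i. I i)" using left_ideal_add[OF assms(2)] by blast
next
  show "0 \<in> (\<Union>i. I i)" using left_ideal_zero[OF assms(2)] by blast
next
  fix x assume "x \<in> (\<Union>i. I i)"
  then show "- x \<in> (\<Union>i. I i)" using left_ideal_uminus[OF assms(2)] by blast
next
  fix r x assume "x \<in> (\<Union>i. I i)"
  then show "r * x \<in> (\<Union>i. I i)" using left_ideal_mult[OF assms(2)] by blast
qed

lemma right_ideal_UN_mono:
  fixes I :: "nat \<Rightarrow> 'a::ring_1 set"
  assumes "mono I" and "\<And>i. right_ideal (I i)"
  shows "right_ideal (\<Union>i. I i)"
proof (rule right_idealI)
  fix x y assume "x \<in> (\<Union>i. I i)" "y \<in> (\<Union>i. I i)"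
  then obtain i j where "x \<in> I i" "y \<in> I j" by blast
  then have "x \<in> I (max i j)" "y \<in> I (max i j)"
    using monoD[OF assms(1), of i "max i j"] monoD[OF assms(1), of j "max i j"] by auto
  then show "x + y \<in> (\<Union>i. I i)" using right_ideal_add[OF assms(2)] by blast
next
  show "0 \<in> (\<Union>i. I i)" using right_ideal_zero[OF assms(2)] by blast
next
  fix x assume "x \<in> (\<Union>i. I i)"
  then show "- x \<in> (\<Union>i. I i)" using right_ideal_uminus[OF assms(2)] by blast
next
  fix r x assume "x \<in> (\<Union>i. I i)"
  then show "x * r \<in> (\<Union>i. I i)" using right_ideal_mult[OF assms(2)] by blast
qed

lemma nc_unit_if_left_inverse:
  fixes a b :: "'a::ring_1_no_zero_divisors"
  assumes "b * a = 1"
  shows "nc_unit a"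
proof -
  have "(a * b - 1) * a = 0"
    by (simp add: algebra_simps mult.assoc assms)
  with assms have "a * b = 1" by auto
  with assms show ?thesis unfolding nc_unit_def by blast
qed

lemma lprinc_eq_UNIV_iff: "lprinc (a::'a::ring_1_no_zero_divisors) = UNIV \<longleftrightarrow> nc_unit a"
proof
  assume "lprinc a = UNIV"
  then obtain r where "1 = r * a" by (metis UNIV_I mem_lprinc)
  then show "nc_unit a" by (metis nc_unit_if_left_inverse)
next
  assume "nc_unit a"
  then obtain b where "b * a = 1" unfolding nc_unit_def by blast
  then have "x = (x * b) * a" for x by (simp add: mult.assoc)
  then show "lprinc a = UNIV" by (metis UNIV_eq_I mult_mem_lprinc)
qed

lemma lprinc_unit_mult: "nc_unit u \<Longrightarrow> lprinc (u * b) = lprinc (b::'a::ring_1)"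
  unfolding nc_unit_def set_eq_iff mem_lprinc by (metis mult.assoc mult_1)

section \<open>Chain conditions in a principal ideal domain\<close>

lemma PID_left_principal:
  "is_PID TYPE('a::ring_1_no_zero_divisors) \<Longrightarrow> left_ideal (I::'a set) \<Longrightarrow> \<exists>a. I = lprinc a"
  unfolding is_PID_def by blast

lemma PID_right_principal:
  "is_PID TYPE('a::ring_1_no_zero_divisors) \<Longrightarrow> right_ideal (I::'a set) \<Longrightarrow> \<exists>a. I = rprinc a"
  unfolding is_PID_def by blast

lemma wf_strict_superset_principal:
  fixes gen :: "'a \<Rightarrow> 'a set"
  assumes gen_self: "\<And>a. a \<in> gen a"
    and gen_least: "\<And>a b. a \<in> gen b \<Longrightarrow> gen a \<subseteq> gen b"
    and UN_principal:
      "\<And>f :: nat \<Rightarrow> 'a. mono (\<lambda>i. gen (f i)) \<Longrightarrow> \<exists>g. (\<Union>i. gen (f i)) = gen g"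
  shows "wf {(d1, d2). gen d2 \<subset> gen d1}"
proof (rule ccontr)
  assume "\<not> ?thesis"
  then obtain f where f: "\<And>i. gen (f i) \<subset> gen (f (Suc i))"
    unfolding wf_iff_no_infinite_down_chain by auto
  then have "mono (\<lambda>i. gen (f i))" by (simp add: less_imp_le mono_iff_le_Suc)
  then obtain g where g: "(\<Union>i. gen (f i)) = gen g" using UN_principal[of f] by blast
  then obtain n where "g \<in> gen (f n)" using gen_self by blast
  then have "gen (f (Suc n)) \<subseteq> gen (f n)" using g gen_least by blast
  with f[of n] show False by blast
qed

lemma PID_wf_lprinc:
  assumes "is_PID TYPE('a::ring_1_no_zero_divisors)"
  shows "wf {(d1::'a, d2). lprinc d2 \<subset> lprinc d1}"
proof (rule wf_strict_superset_principal)
  fix f :: "nat \<Rightarrow> 'a" assume "mono (\<lambda>i. lprinc (f i))"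
  then show "\<exists>g. (\<Union>i. lprinc (f i)) = lprinc g"
    by (intro PID_left_principal[OF assms] left_ideal_UN_mono left_ideal_lprinc)
qed (simp_all add: lprinc_least left_ideal_lprinc)

lemma PID_wf_rprinc:
  assumes "is_PID TYPE('a::ring_1_no_zero_divisors)"
  shows "wf {(d1::'a, d2). rprinc d2 \<subset> rprinc d1}"
proof (rule wf_strict_superset_principal)
  fix f :: "nat \<Rightarrow> 'a" assume "mono (\<lambda>i. rprinc (f i))"
  then show "\<exists>g. (\<Union>i. rprinc (f i)) = rprinc g"
    by (intro PID_right_principal[OF assms] right_ideal_UN_mono right_ideal_rprinc)
qed (simp_all add: rprinc_least right_ideal_rprinc)

lemma PID_ex_maximal:
  assumes PID: "is_PID TYPE('a::ring_1_no_zero_divisors)"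
    and "J0 \<in> S" and S: "\<And>J. J \<in> S \<Longrightarrow> left_ideal (J::'a set)"
  shows "\<exists>J\<in>S. \<forall>J'\<in>S. J \<subseteq> J' \<longrightarrow> J' = J"
proof -
  obtain d0 where "lprinc d0 \<in> S" using PID_left_principal[OF PID S] \<open>J0 \<in> S\<close> by metis
  then obtain z where z: "lprinc z \<in> S"
    and z_max: "\<And>y. lprinc z \<subset> lprinc y \<Longrightarrow> lprinc y \<notin> S"
    using wfE_min[OF PID_wf_lprinc[OF PID], of d0 "{d. lprinc d \<in> S}"] by auto
  have "J' = lprinc z" if "J' \<in> S" "lprinc z \<subseteq> J'" for J'
    using PID_left_principal[OF PID S[OF \<open>J' \<in> S\<close>]] z_max that by blast
  with z show ?thesis by blast
qed

text \<open>Left ideals containing a fixed Ra \<noteq> 0 satisfy the minimal condition: writing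
  such an ideal as Rd with a = h d, a strictly descending chain of the Rd gives a strictly
  ascending chain of right ideals hR.\<close>
lemma PID_ex_minimal_above:
  assumes PID: "is_PID TYPE('a::ring_1_no_zero_divisors)" and "(a::'a) \<noteq> 0"
    and "J0 \<in> S" and S: "\<And>J. J \<in> S \<Longrightarrow> left_ideal J \<and> lprinc a \<subseteq> J"
  shows "\<exists>J\<in>S. \<forall>J'\<in>S. J' \<subseteq> J \<longrightarrow> J' = J"
proof -
  have cofactor: "\<exists>h d. J = lprinc d \<and> a = h * d" if "J \<in> S" for J
    using PID_left_principal[OF PID] S[OF that] lprinc_self by (metis mem_lprinc subsetD)
  define H where "H = {h. \<exists>d. lprinc d \<in> S \<and> a = h * d}"
  obtain h0 where "h0 \<in> H" using cofactor[OF \<open>J0 \<in> S\<close>] \<open>J0 \<in> S\<close> unfolding H_def by blast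
  then obtain h where "h \<in> H" and h_max: "\<And>h'. rprinc h \<subset> rprinc h' \<Longrightarrow> h' \<notin> H"
    using wfE_min[OF PID_wf_rprinc[OF PID], of h0 H] by auto
  then obtain d where dS: "lprinc d \<in> S" and a_hd: "a = h * d" unfolding H_def by blast
  have "J' = lprinc d" if J': "J' \<in> S" "J' \<subseteq> lprinc d" for J'
  proof -
    obtain h' d' where d': "J' = lprinc d'" and a_hd': "a = h' * d'" using cofactor[OF J'(1)] by blast
    then have "h' \<in> H" using J'(1) unfolding H_def by blast
    obtain g where g: "d' = g * d" using J'(2) d' lprinc_self mem_lprinc by blast
    have "h * d = (h' * g) * d" using a_hd a_hd' g by (simp add: mult.assoc)
    then have h: "h = h' * g" using \<open>a \<noteq> 0\<close> a_hd by auto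
    then have "rprinc h \<subseteq> rprinc h'" by (simp add: rprinc_least right_ideal_rprinc)
    with h_max \<open>h' \<in> H\<close> have "h' \<in> rprinc h" by (metis psubsetI rprinc_self)
    then obtain s where s: "h' = h * s" by (auto simp: mem_rprinc)
    have "h * 1 = h * (s * g)" using h s by (simp add: mult.assoc)
    then have "s * g = 1" using \<open>a \<noteq> 0\<close> a_hd by (metis mult_cancel_left mult_zero_left)
    then have "d = s * d'" using g by (simp flip: mult.assoc)
    then have "lprinc d \<subseteq> J'" using d' by (simp add: lprinc_least left_ideal_lprinc)
    with J'(2) show ?thesis by blast
  qed
  with dS show ?thesis by blast
qed

section \<open>Simple subquotients, annihilators and invariant elements\<close>

definition simple_quotient :: "'a::ring_1 set \<Rightarrow> 'a set \<Rightarrow> bool" where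
  "simple_quotient J K \<longleftrightarrow> left_ideal J \<and> left_ideal K \<and> K \<subset> J \<and>
     (\<forall>I. left_ideal I \<and> K \<subseteq> I \<and> I \<subseteq> J \<longrightarrow> I = K \<or> I = J)"

lemma simple_quotient_UNIV_iff: "simple_quotient UNIV L \<longleftrightarrow> maximal_left_ideal L"
  unfolding simple_quotient_def maximal_left_ideal_def using left_ideal_UNIV by blast

lemma simple_quotient_plus_eq:
  assumes JK: "simple_quotient J K" and I: "left_ideal I" "I \<subseteq> J" "\<not> I \<subseteq> K"
  shows "I + K = J"
proof -
  have J: "left_ideal J" and K: "left_ideal K" and "K \<subset> J"
    using JK by (auto simp: simple_quotient_def)
  have "K \<subseteq> I + K" by (rule set_zero_plus2[OF left_ideal_zero[OF I(1)]])
  moreover have "I \<subseteq> I + K" using set_zero_plus2[OF left_ideal_zero[OF K]] by (simp add: add.commute)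
  moreover have "I + K \<subseteq> J"
    using \<open>I \<subseteq> J\<close> \<open>K \<subset> J\<close> by (auto elim!: set_plus_elim intro: left_ideal_add[OF J])
  ultimately show ?thesis
    using JK I left_ideal_plus[OF I(1) K] unfolding simple_quotient_def by blast
qed

lemma PID_ex_simple_quotient_above:
  assumes PID: "is_PID TYPE('a::ring_1_no_zero_divisors)"
    and K: "left_ideal (K::'a set)" "K \<noteq> {0}" and M: "left_ideal M" "K \<subset> M"
  shows "\<exists>T. simple_quotient T K \<and> T \<subseteq> M"
proof -
  obtain k where k: "K = lprinc k" using PID_left_principal[OF PID K(1)] by blast
  with K(2) have "k \<noteq> 0" by auto
  define S where "S = {J. left_ideal J \<and> K \<subset> J \<and> J \<subseteq> M}"
  have "M \<in> S" using M unfolding S_def by blast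
  moreover have "left_ideal J \<and> lprinc k \<subseteq> J" if "J \<in> S" for J
    using that k unfolding S_def by auto
  ultimately obtain T where T: "T \<in> S" and T_min: "\<forall>J\<in>S. J \<subseteq> T \<longrightarrow> J = T"
    using PID_ex_minimal_above[OF PID \<open>k \<noteq> 0\<close>] by blast
  have "I = K \<or> I = T" if I: "left_ideal I" "K \<subseteq> I" "I \<subseteq> T" for I
  proof (cases "I = K")
    case False
    with I T have "I \<in> S" unfolding S_def by auto
    with T_min I(3) show ?thesis by blast
  qed simp
  with T K(1) have "simple_quotient T K" unfolding S_def simple_quotient_def by auto
  with T show ?thesis unfolding S_def by auto
qed

lemma PID_ex_maximal_left_ideal_above:
  assumes PID: "is_PID TYPE('a::ring_1_no_zero_divisors)"
    and M: "left_ideal (M::'a set)" "M \<noteq> UNIV"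
  shows "\<exists>L. maximal_left_ideal L \<and> M \<subseteq> L"
proof -
  define S where "S = {J. left_ideal J \<and> M \<subseteq> J \<and> J \<noteq> UNIV}"
  have "M \<in> S" using M unfolding S_def by blast
  moreover have "\<And>J. J \<in> S \<Longrightarrow> left_ideal J" unfolding S_def by blast
  ultimately obtain L where L: "L \<in> S" and L_max: "\<forall>J\<in>S. L \<subseteq> J \<longrightarrow> J = L"
    by (metis PID_ex_maximal[OF PID])
  have "J = L \<or> J = UNIV" if J: "left_ideal J" "L \<subseteq> J" for J
  proof (cases "J = UNIV")
    case False
    with J L have "J \<in> S" unfolding S_def by auto
    with L_max J(2) show ?thesis by blast
  qed simp
  with L have "maximal_left_ideal L" unfolding S_def maximal_left_ideal_def by auto
  with L show ?thesis unfolding S_def by auto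
qed

definition annihilator :: "'a::ring_1 set \<Rightarrow> 'a set \<Rightarrow> 'a set" where
  "annihilator J K = {c. \<forall>j\<in>J. c * j \<in> K}"

lemma left_ideal_annihilator:
  assumes "left_ideal K"
  shows "left_ideal (annihilator J K)"
proof -
  have "annihilator J K = (\<Inter>j\<in>J. {c. c * j \<in> K})" unfolding annihilator_def by blast
  then show ?thesis by (simp add: left_ideal_INT left_ideal_vimage_rmult assms)
qed

lemma right_ideal_annihilator:
  assumes J: "left_ideal J" and K: "left_ideal K"
  shows "right_ideal (annihilator J K)"
proof (rule right_idealI)
  show "0 \<in> annihilator J K" using left_ideal_zero[OF K] by (simp add: annihilator_def)
  show "x + y \<in> annihilator J K" if "x \<in> annihilator J K" "y \<in> annihilator J K" for x y
    using that left_ideal_add[OF K] by (simp add: annihilator_def distrib_right)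
  show "- x \<in> annihilator J K" if "x \<in> annihilator J K" for x
    using that left_ideal_uminus[OF K] by (simp add: annihilator_def)
  show "x * r \<in> annihilator J K" if "x \<in> annihilator J K" for x r
    using that left_ideal_mult[OF J] by (simp add: annihilator_def mult.assoc)
qed

lemma annihilator_prime:
  assumes JK: "simple_quotient J K" and cxb: "\<And>x. c * x * b \<in> annihilator J K"
  shows "c \<in> annihilator J K \<or> b \<in> annihilator J K"
proof (rule disjCI)
  assume "b \<notin> annihilator J K"
  then obtain t where t: "t \<in> J" "b * t \<notin> K" unfolding annihilator_def by blast
  have J: "left_ideal J" and K: "left_ideal K" using JK by (auto simp: simple_quotient_def)
  have "lprinc (b * t) \<subseteq> J" by (simp add: lprinc_least J left_ideal_mult t(1))
  moreover have "\<not> lprinc (b * t) \<subseteq> K" using t(2) lprinc_self by blast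
  ultimately have J_eq: "lprinc (b * t) + K = J"
    by (rule simple_quotient_plus_eq[OF JK left_ideal_lprinc])
  show "c \<in> annihilator J K" unfolding annihilator_def mem_Collect_eq
  proof
    fix j assume "j \<in> J"
    then obtain r k where j: "j = r * (b * t) + k" and "k \<in> K"
      unfolding J_eq[symmetric] by (auto elim!: set_plus_elim simp: mem_lprinc)
    have "c * j = (c * r * b) * t + c * k" by (simp add: j distrib_left mult.assoc)
    moreover have "(c * r * b) * t \<in> K" using cxb[of r] t(1) unfolding annihilator_def by blast
    ultimately show "c * j \<in> K" by (simp add: left_ideal_add[OF K] left_ideal_mult[OF K \<open>k \<in> K\<close>])
  qed
qed

definition invariant :: "'a::ring_1 \<Rightarrow> bool" where
  "invariant p \<longleftrightarrow> lprinc p = rprinc p"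

lemma invariant_lmult_eq: "invariant p \<Longrightarrow> \<exists>r'. r * p = p * r'"
  unfolding invariant_def by (metis mem_rprinc mult_mem_lprinc)

lemma invariant_rmult_eq: "invariant p \<Longrightarrow> \<exists>r'. p * r = r' * p"
  unfolding invariant_def by (metis mem_lprinc mult_mem_rprinc)

lemma invariant_one: "invariant 1"
  unfolding invariant_def lprinc_eq_range rprinc_eq_range by simp

lemma invariant_mult:
  assumes p: "invariant p" and q: "invariant q"
  shows "invariant (p * q)"
proof -
  have "lprinc (p * q) \<subseteq> rprinc (p * q)"
  proof
    fix x assume "x \<in> lprinc (p * q)"
    then obtain r where "x = r * p * q" by (auto simp: mem_lprinc mult.assoc)
    moreover obtain r' where "r * p = p * r'" using invariant_lmult_eq[OF p] by blast
    moreover obtain r'' where "r' * q = q * r''" using invariant_lmult_eq[OF q] by blast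
    ultimately have "x = (p * q) * r''" by (simp add: mult.assoc)
    then show "x \<in> rprinc (p * q)" by simp
  qed
  moreover have "rprinc (p * q) \<subseteq> lprinc (p * q)"
  proof
    fix x assume "x \<in> rprinc (p * q)"
    then obtain r where "x = p * (q * r)" by (auto simp: mem_rprinc mult.assoc)
    moreover obtain r' where "q * r = r' * q" using invariant_rmult_eq[OF q] by blast
    moreover obtain r'' where "p * r' = r'' * p" using invariant_rmult_eq[OF p] by blast
    ultimately have "x = r'' * (p * q)" by (metis mult.assoc)
    then show "x \<in> lprinc (p * q)" by simp
  qed
  ultimately show ?thesis unfolding invariant_def by blast
qed

lemma invariant_power: "invariant p \<Longrightarrow> invariant (p ^ n)"
  by (induction n) (simp_all add: invariant_one invariant_mult)

lemma PID_two_sided_ideal_invariant: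
  assumes PID: "is_PID TYPE('a::ring_1_no_zero_divisors)"
    and L: "left_ideal (A::'a set)" and R: "right_ideal A"
  shows "\<exists>p. invariant p \<and> A = lprinc p"
proof -
  obtain p where p: "A = lprinc p" using PID_left_principal[OF PID L] by blast
  obtain p' where p': "A = rprinc p'" using PID_right_principal[OF PID R] by blast
  have "rprinc p \<subseteq> A" by (rule rprinc_least[OF R]) (simp add: p)
  moreover have "y \<in> rprinc p" if "y \<in> A" for y
  proof -
    obtain t where t: "p' = t * p" using p p' rprinc_self mem_lprinc by blast
    show ?thesis
    proof (cases "t = 0")
      case True
      then show ?thesis using t p' \<open>y \<in> A\<close> by (auto simp: mem_rprinc)
    next
      case False
      obtain r where "t * y = p' * r" using left_ideal_mult[OF L \<open>y \<in> A\<close>] p' mem_rprinc by blast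
      then have "t * y = t * (p * r)" by (simp add: t mult.assoc)
      with False have "y = p * r" by simp
      then show ?thesis by simp
    qed
  qed
  ultimately have "A = rprinc p" by blast
  with p show ?thesis unfolding invariant_def by blast
qed

lemma invariant_power_mem_annihilator:
  assumes JK: "simple_quotient J K" and p: "invariant p"
  shows "p ^ Suc n \<in> annihilator J K \<Longrightarrow> p \<in> annihilator J K"
proof (induction n)
  case (Suc n)
  have R: "right_ideal (annihilator J K)"
    using JK by (simp add: right_ideal_annihilator simple_quotient_def)
  have "p ^ Suc n * x * p \<in> annihilator J K" for x
  proof -
    obtain x' where "x * p = p * x'" using invariant_lmult_eq[OF p] by blast
    then have "p ^ Suc n * x * p = p ^ Suc (Suc n) * x'"
      by (metis mult.assoc power_Suc2)
    then show ?thesis using right_ideal_mult[OF R Suc.prems] by simp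
  qed
  then show ?case using annihilator_prime[OF JK] Suc.IH by blast
qed simp

lemma simple_quotient_rmult_iso:
  assumes JK: "simple_quotient J K" and L0: "simple_quotient L0 (annihilator J K)"
  shows "\<exists>t\<in>J. (\<forall>l\<in>L0. l * t \<in> K \<longleftrightarrow> l \<in> annihilator J K) \<and> (\<lambda>l. l * t) ` L0 + K = J"
proof -
  have J: "left_ideal J" and K: "left_ideal K"
    using JK by (auto simp: simple_quotient_def)
  have L0_ideal: "left_ideal L0" and ann_L0: "annihilator J K \<subset> L0"
    and L0_min: "\<And>I. left_ideal I \<Longrightarrow> annihilator J K \<subseteq> I \<Longrightarrow> I \<subseteq> L0 \<Longrightarrow>
      I = annihilator J K \<or> I = L0"
    using L0 by (auto simp: simple_quotient_def)
  obtain l0 t where l0: "l0 \<in> L0" and t: "t \<in> J" and l0t: "l0 * t \<notin> K"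
    using ann_L0 unfolding annihilator_def by blast
  have "left_ideal (L0 \<inter> {l. l * t \<in> K})"
    by (rule left_ideal_Int[OF L0_ideal left_ideal_vimage_rmult[OF K]])
  moreover have "annihilator J K \<subseteq> L0 \<inter> {l. l * t \<in> K}"
    using ann_L0 t unfolding annihilator_def by blast
  moreover have "L0 \<inter> {l. l * t \<in> K} \<noteq> L0" using l0 l0t by blast
  ultimately have "L0 \<inter> {l. l * t \<in> K} = annihilator J K" using L0_min by blast
  moreover have "(\<lambda>l. l * t) ` L0 + K = J"
  proof (rule simple_quotient_plus_eq[OF JK left_ideal_image_rmult[OF L0_ideal]])
    show "(\<lambda>l. l * t) ` L0 \<subseteq> J" using left_ideal_mult[OF J t] by blast
    show "\<not> (\<lambda>l. l * t) ` L0 \<subseteq> K" using l0 l0t by blast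
  qed
  ultimately show ?thesis using t by blast
qed

text \<open>R/L and T/K are both isomorphic to L0/P for any simple L0/P, P being their common
  annihilator; v is the image of 1 + L under the resulting isomorphism R/L \<cong> T/K.\<close>
lemma PID_hom_from_maximal_left_ideal:
  assumes PID: "is_PID TYPE('a::ring_1_no_zero_divisors)" and L: "maximal_left_ideal (L::'a set)"
    and TK: "simple_quotient T K" and same_ann: "annihilator UNIV L = annihilator T K"
    and nonzero: "annihilator T K \<noteq> {0}"
  shows "\<exists>v\<in>T. v \<notin> K \<and> (\<forall>m\<in>L. m * v \<in> K)"
proof -
  define P where "P = annihilator T K"
  have L_ideal: "left_ideal L" and "L \<noteq> UNIV" using L by (auto simp: maximal_left_ideal_def)
  have T: "left_ideal T" and K: "left_ideal K" and "K \<subset> T"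
    using TK by (auto simp: simple_quotient_def)
  have "1 \<notin> P" using \<open>K \<subset> T\<close> by (auto simp: P_def annihilator_def)
  then have "P \<subset> UNIV" by blast
  moreover have "left_ideal P" unfolding P_def by (rule left_ideal_annihilator[OF K])
  ultimately obtain L0 where L0: "simple_quotient L0 P"
    using PID_ex_simple_quotient_above[OF PID _ _ left_ideal_UNIV] nonzero[folded P_def] by blast
  have L0_ideal: "left_ideal L0" using L0 by (simp add: simple_quotient_def)
  have "simple_quotient UNIV L" using L by (simp add: simple_quotient_UNIV_iff)
  obtain s where s_ker: "\<forall>l\<in>L0. l * s \<in> L \<longleftrightarrow> l \<in> P"
    and s_onto: "(\<lambda>l. l * s) ` L0 + L = UNIV"
    using simple_quotient_rmult_iso[OF \<open>simple_quotient UNIV L\<close>, unfolded same_ann, folded P_def, OF L0]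
    by blast
  obtain t where "t \<in> T" and t_ker: "\<forall>l\<in>L0. l * t \<in> K \<longleftrightarrow> l \<in> P"
    using simple_quotient_rmult_iso[OF TK, folded P_def, OF L0] by blast
  have "1 \<in> (\<lambda>l. l * s) ` L0 + L" using s_onto by simp
  then obtain l1 m1 where l1: "l1 \<in> L0" and m1: "m1 \<in> L" and one: "1 = l1 * s + m1"
    by (auto elim!: set_plus_elim)
  have "m * (l1 * t) \<in> K" if "m \<in> L" for m
  proof -
    have "m = m * (l1 * s + m1)" using one by simp
    then have "(m * l1) * s = m - m * m1" by (simp add: algebra_simps)
    then have "(m * l1) * s \<in> L"
      by (simp add: left_ideal_diff[OF L_ideal \<open>m \<in> L\<close>] left_ideal_mult[OF L_ideal m1])
    then have "m * l1 \<in> P" using s_ker left_ideal_mult[OF L0_ideal l1] by blast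
    then have "(m * l1) * t \<in> K" using t_ker left_ideal_mult[OF L0_ideal l1] by blast
    then show ?thesis by (simp add: mult.assoc)
  qed
  moreover have "l1 * t \<notin> K"
  proof
    assume "l1 * t \<in> K"
    then have "l1 * s \<in> L" using t_ker s_ker l1 by blast
    then have "1 \<in> L" unfolding one using left_ideal_add[OF L_ideal _ m1] by blast
    then show False using left_ideal_eq_UNIV[OF L_ideal] \<open>L \<noteq> UNIV\<close> by blast
  qed
  moreover have "l1 * t \<in> T" by (rule left_ideal_mult[OF T \<open>t \<in> T\<close>])
  ultimately show ?thesis by blast
qed

section \<open>Fitting decompositions and c-reducing elements\<close>

lemma left_ideal_vimage_lmult_invariant:
  assumes c: "invariant c" and I: "left_ideal I"
  shows "left_ideal {w. c * w \<in> I}"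
proof (rule left_idealI)
  show "r * w \<in> {w. c * w \<in> I}" if "w \<in> {w. c * w \<in> I}" for r w
  proof -
    obtain r' where "c * r = r' * c" using invariant_rmult_eq[OF c] by blast
    then have "c * (r * w) = r' * (c * w)" by (metis mult.assoc)
    then show ?thesis using that left_ideal_mult[OF I] by simp
  qed
qed (simp_all add: distrib_left left_ideal_zero[OF I] left_ideal_add[OF I] left_ideal_uminus[OF I])

lemma left_ideal_rprinc_plus_lprinc: "invariant c \<Longrightarrow> left_ideal (rprinc c + lprinc a)"
  using left_ideal_plus[OF left_ideal_lprinc left_ideal_lprinc, of c a] by (simp add: invariant_def)

lemma PID_mono_stabilizes:
  fixes K :: "nat \<Rightarrow> 'a::ring_1_no_zero_divisors set"
  assumes PID: "is_PID TYPE('a)" and "mono K" and "\<And>n. left_ideal (K n)"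
  shows "\<exists>n. \<forall>m\<ge>n. K m = K n"
proof -
  obtain n where "\<forall>J\<in>range K. K n \<subseteq> J \<longrightarrow> J = K n"
    using PID_ex_maximal[OF PID, of "K 0" "range K"] assms(3) by blast
  then show ?thesis using monoD[OF \<open>mono K\<close>] by blast
qed

lemma PID_antimono_stabilizes:
  fixes I :: "nat \<Rightarrow> 'a::ring_1_no_zero_divisors set"
  assumes PID: "is_PID TYPE('a)" and "a \<noteq> 0" and "antimono I"
    and "\<And>n. left_ideal (I n)" and "\<And>n. lprinc a \<subseteq> I n"
  shows "\<exists>n. \<forall>m\<ge>n. I m = I n"
proof -
  obtain n where "\<forall>J\<in>range I. J \<subseteq> I n \<longrightarrow> J = I n"
    using PID_ex_minimal_above[OF PID \<open>a \<noteq> 0\<close>, of "I 0" "range I"] assms(4,5) by blast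
  then show ?thesis using antimonoD[OF \<open>antimono I\<close>] by blast
qed

text \<open>The left ideals {w. p^n w \<in> Ra} and p^n R + Ra play the roles of the kernel and the image
  of the n-th power of p acting on R/Ra; once both chains are stable at M they are complementary
  above Ra.\<close>
lemma fitting_decomposition:
  fixes p a :: "'a::ring_1"
  assumes K_stable: "{w. p ^ (M + M) * w \<in> lprinc a} \<subseteq> {w. p ^ M * w \<in> lprinc a}"
    and I_stable: "rprinc (p ^ M) + lprinc a \<subseteq> rprinc (p ^ (M + M)) + lprinc a"
  shows "{w. p ^ M * w \<in> lprinc a} \<inter> (rprinc (p ^ M) + lprinc a) \<subseteq> lprinc a"
    and "{w. p ^ M * w \<in> lprinc a} + (rprinc (p ^ M) + lprinc a) = UNIV"
proof -
  have La: "left_ideal (lprinc a)" by (rule left_ideal_lprinc)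
  show "{w. p ^ M * w \<in> lprinc a} \<inter> (rprinc (p ^ M) + lprinc a) \<subseteq> lprinc a"
  proof
    fix w assume w: "w \<in> {w. p ^ M * w \<in> lprinc a} \<inter> (rprinc (p ^ M) + lprinc a)"
    then obtain s t where w_eq: "w = p ^ M * s + t * a"
      by (auto elim!: set_plus_elim simp: mem_rprinc mem_lprinc)
    have "p ^ (M + M) * s = p ^ M * w - (p ^ M * t) * a"
      by (simp add: w_eq distrib_left power_add mult.assoc)
    then have "p ^ (M + M) * s \<in> lprinc a" using w left_ideal_diff[OF La] by simp
    then have "p ^ M * s \<in> lprinc a" using K_stable by blast
    then show "w \<in> lprinc a" by (simp add: w_eq left_ideal_add[OF La])
  qed
  have "m \<in> {w. p ^ M * w \<in> lprinc a} + (rprinc (p ^ M) + lprinc a)" for m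
  proof -
    have "p ^ M * m \<in> rprinc (p ^ M) + lprinc a"
      using set_plus_intro[OF mult_mem_rprinc[of "p ^ M" m] left_ideal_zero[OF La]] by simp
    then have "p ^ M * m \<in> rprinc (p ^ (M + M)) + lprinc a" using I_stable by blast
    then obtain s t where st: "p ^ M * m = p ^ (M + M) * s + t * a"
      by (auto elim!: set_plus_elim simp: mem_rprinc mem_lprinc)
    have "p ^ M * (m - p ^ M * s) = t * a"
      by (simp add: st right_diff_distrib power_add mult.assoc)
    then have "m - p ^ M * s \<in> {w. p ^ M * w \<in> lprinc a}" by simp
    moreover have "p ^ M * s \<in> rprinc (p ^ M) + lprinc a"
      using set_plus_intro[OF mult_mem_rprinc[of "p ^ M" s] left_ideal_zero[OF La]] by simp
    ultimately have "(m - p ^ M * s) + p ^ M * s \<in> {w. p ^ M * w \<in> lprinc a} + (rprinc (p ^ M) + lprinc a)"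
      by (rule set_plus_intro)
    then show ?thesis by simp
  qed
  then show "{w. p ^ M * w \<in> lprinc a} + (rprinc (p ^ M) + lprinc a) = UNIV" by blast
qed

lemma PID_fitting:
  fixes p a :: "'a::ring_1_no_zero_divisors"
  assumes PID: "is_PID TYPE('a)" and "a \<noteq> 0" and p: "invariant p"
  shows "\<exists>n. {w. p ^ Suc n * w \<in> lprinc a} \<inter> (rprinc (p ^ Suc n) + lprinc a) \<subseteq> lprinc a
    \<and> {w. p ^ Suc n * w \<in> lprinc a} + (rprinc (p ^ Suc n) + lprinc a) = UNIV"
proof -
  define K where "K n = {w. p ^ n * w \<in> lprinc a}" for n
  define I where "I n = rprinc (p ^ n) + lprinc a" for n
  have "mono K"
    unfolding mono_iff_le_Suc K_def by (auto simp: mult.assoc intro: left_ideal_mult[OF left_ideal_lprinc])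
  moreover have "left_ideal (K n)" for n
    unfolding K_def by (rule left_ideal_vimage_lmult_invariant[OF invariant_power[OF p] left_ideal_lprinc])
  ultimately obtain n1 where n1: "\<forall>m\<ge>n1. K m = K n1" using PID_mono_stabilizes[OF PID] by blast
  have "rprinc (p ^ Suc n) \<subseteq> rprinc (p ^ n)" for n
    by (rule rprinc_least[OF right_ideal_rprinc]) (metis mult_mem_rprinc power_Suc2)
  then have "antimono I" unfolding antimono_iff_le_Suc I_def by (simp add: set_plus_mono2)
  moreover have "left_ideal (I n)" for n
    unfolding I_def by (rule left_ideal_rprinc_plus_lprinc[OF invariant_power[OF p]])
  moreover have "lprinc a \<subseteq> I n" for n
    unfolding I_def using set_zero_plus2[OF right_ideal_zero[OF right_ideal_rprinc]] .
  ultimately obtain n2 where n2: "\<forall>m\<ge>n2. I m = I n2"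
    using PID_antimono_stabilizes[OF PID \<open>a \<noteq> 0\<close>] by blast
  define M where "M = Suc (max n1 n2)"
  have "n1 \<le> M" "n2 \<le> M" unfolding M_def by simp_all
  then have "K (M + M) = K M" "I (M + M) = I M"
    using n1 n2 by (metis trans_le_add1)+
  then have "{w. p ^ M * w \<in> lprinc a} \<inter> (rprinc (p ^ M) + lprinc a) \<subseteq> lprinc a
    \<and> {w. p ^ M * w \<in> lprinc a} + (rprinc (p ^ M) + lprinc a) = UNIV"
    using fitting_decomposition[of p M a] unfolding K_def I_def by simp
  then show ?thesis unfolding M_def by blast
qed

text \<open>In R/Ra, the class v' of v is nonzero, its annihilator strictly contains Ra, and Rv' is a
  proper submodule.\<close>
definition c_reducing_element :: "'a::ring_1 \<Rightarrow> 'a \<Rightarrow> bool" where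
  "c_reducing_element a v \<longleftrightarrow>
     v \<notin> lprinc a \<and> lprinc a \<subset> {r. r * v \<in> lprinc a} \<and> (\<nexists>r s. r * v + s * a = 1)"

lemma direct_sum_mult_component:
  assumes K: "left_ideal K" and I: "left_ideal I" and "K \<inter> I = A"
    and "k \<in> K" "i \<in> I" "k + i = 1" and "x \<in> I"
  shows "x * k \<in> A"
proof -
  have "x * k = x - x * i" using \<open>k + i = 1\<close> by (metis add_diff_cancel distrib_left mult.right_neutral)
  then have "x * k \<in> I" using left_ideal_diff[OF I \<open>x \<in> I\<close> left_ideal_mult[OF I \<open>i \<in> I\<close>]] by simp
  with left_ideal_mult[OF K \<open>k \<in> K\<close>] \<open>K \<inter> I = A\<close> show ?thesis by blast
qed

lemma direct_sum_imp_c_reducing_element: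
  fixes a :: "'a::ring_1"
  assumes K: "left_ideal K" and I: "left_ideal I"
    and cap: "K \<inter> I = lprinc a" and sum: "K + I = UNIV"
    and "K \<noteq> lprinc a" and "I \<noteq> lprinc a"
  shows "\<exists>v. c_reducing_element a v"
proof -
  have La: "left_ideal (lprinc a)" by (rule left_ideal_lprinc)
  have "1 \<in> K + I" using sum by simp
  then obtain k i where k: "k \<in> K" and i: "i \<in> I" and one: "1 = k + i"
    by (auto elim!: set_plus_elim)
  have split: "x = x * k + x * i" for x
    using one by (metis distrib_left mult.right_neutral)
  have I_k: "x * k \<in> lprinc a" if "x \<in> I" for x
    using direct_sum_mult_component[OF K I cap k i one[symmetric] that] .
  have "I \<inter> K = lprinc a" "i + k = 1" using cap one by (auto simp: add.commute)
  then have K_i: "x * i \<in> lprinc a" if "x \<in> K" for x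
    using direct_sum_mult_component[OF I K _ i k _ that] by blast
  obtain k0 where k0: "k0 \<in> K" "k0 \<notin> lprinc a" using cap \<open>K \<noteq> lprinc a\<close> by blast
  obtain i0 where i0: "i0 \<in> I" "i0 \<notin> lprinc a" using cap \<open>I \<noteq> lprinc a\<close> by blast
  have "k \<notin> lprinc a"
  proof
    assume "k \<in> lprinc a"
    then have "k0 * k + k0 * i \<in> lprinc a"
      using left_ideal_add[OF La left_ideal_mult[OF La] K_i[OF k0(1)]] by blast
    with k0(2) split[of k0] show False by simp
  qed
  moreover have "lprinc a \<subset> {r. r * k \<in> lprinc a}"
  proof -
    have "a \<in> I" using cap lprinc_self by blast
    then have "lprinc a \<subseteq> {r. r * k \<in> lprinc a}"
      using I_k by (simp add: lprinc_least left_ideal_vimage_rmult[OF La])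
    with i0 I_k show ?thesis by blast
  qed
  moreover have "\<nexists>r s. r * k + s * a = 1"
  proof
    assume "\<exists>r s. r * k + s * a = 1"
    then obtain r s where rs: "r * k + s * a = 1" by blast
    have "a \<in> K" using cap lprinc_self by blast
    then have "1 \<in> K" unfolding rs[symmetric] by (simp add: left_ideal_add[OF K] left_ideal_mult[OF K] k)
    then have "I = lprinc a" using cap left_ideal_eq_UNIV[OF K] by auto
    with \<open>I \<noteq> lprinc a\<close> show False ..
  qed
  ultimately show ?thesis unfolding c_reducing_element_def by blast
qed

lemma PID_fitting_cases:
  fixes p a :: "'a::ring_1_no_zero_divisors"
  assumes PID: "is_PID TYPE('a)" and "a \<noteq> 0" and p: "invariant p"
  shows "(\<exists>v. c_reducing_element a v) \<or> (\<exists>n. rprinc (p ^ Suc n) \<subseteq> lprinc a)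
    \<or> (\<exists>n. {w. p ^ Suc n * w \<in> lprinc a} = lprinc a \<and> rprinc (p ^ Suc n) + lprinc a = UNIV)"
proof -
  obtain n where cap: "{w. p ^ Suc n * w \<in> lprinc a} \<inter> (rprinc (p ^ Suc n) + lprinc a) \<subseteq> lprinc a"
    and sum: "{w. p ^ Suc n * w \<in> lprinc a} + (rprinc (p ^ Suc n) + lprinc a) = UNIV"
    using PID_fitting[OF PID \<open>a \<noteq> 0\<close> p] by blast
  define K where "K = {w. p ^ Suc n * w \<in> lprinc a}"
  define I where "I = rprinc (p ^ Suc n) + lprinc a"
  have K_ideal: "left_ideal K"
    unfolding K_def by (rule left_ideal_vimage_lmult_invariant[OF invariant_power[OF p] left_ideal_lprinc])
  have I_ideal: "left_ideal I"
    unfolding I_def by (rule left_ideal_rprinc_plus_lprinc[OF invariant_power[OF p]])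
  have "lprinc a \<subseteq> K" by (rule lprinc_least[OF K_ideal]) (simp add: K_def)
  moreover have "lprinc a \<subseteq> I"
    unfolding I_def using set_zero_plus2[OF right_ideal_zero[OF right_ideal_rprinc]] .
  ultimately have "K \<inter> I = lprinc a" using cap unfolding K_def I_def by blast
  consider "I = lprinc a" | "K = lprinc a" | "K \<noteq> lprinc a" "I \<noteq> lprinc a" by blast
  then show ?thesis
  proof cases
    case 1
    have "rprinc (p ^ Suc n) \<subseteq> lprinc a + rprinc (p ^ Suc n)"
      by (rule set_zero_plus2[OF left_ideal_zero[OF left_ideal_lprinc]])
    then have "rprinc (p ^ Suc n) \<subseteq> I" unfolding I_def by (metis add.commute)
    with 1 show ?thesis by blast
  next
    case 2
    have "K + I \<subseteq> I" using \<open>lprinc a \<subseteq> I\<close> 2 by (auto elim!: set_plus_elim intro: left_ideal_add[OF I_ideal])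
    then have "I = UNIV" using sum unfolding K_def I_def by blast
    with 2 show ?thesis unfolding K_def I_def by blast
  next
    case 3
    with direct_sum_imp_c_reducing_element[OF K_ideal I_ideal \<open>K \<inter> I = lprinc a\<close>] sum
    show ?thesis unfolding K_def I_def by blast
  qed
qed

lemma PID_fitting_cases_simple_quotient:
  fixes p a :: "'a::ring_1_no_zero_divisors"
  assumes PID: "is_PID TYPE('a)" and "a \<noteq> 0" and T: "simple_quotient T (lprinc a)"
    and p: "invariant p" "p \<in> annihilator T (lprinc a)"
  shows "(\<exists>v. c_reducing_element a v) \<or> (\<exists>n. rprinc (p ^ Suc n) \<subseteq> lprinc a)"
proof -
  obtain t where t: "t \<in> T" "t \<notin> lprinc a" using T by (auto simp: simple_quotient_def)
  then have "p * t \<in> lprinc a" using p(2) by (simp add: annihilator_def)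
  then have "t \<in> {w. p ^ Suc n * w \<in> lprinc a}" for n
    by (metis left_ideal_mult[OF left_ideal_lprinc] mem_Collect_eq mult.assoc power_Suc2)
  with t(2) show ?thesis using PID_fitting_cases[OF PID \<open>a \<noteq> 0\<close> p(1)] by blast
qed

lemma PID_fitting_cases_maximal_left_ideal:
  fixes q a :: "'a::ring_1_no_zero_divisors"
  assumes PID: "is_PID TYPE('a)" and "a \<noteq> 0"
    and L: "maximal_left_ideal L" "lprinc a \<subseteq> L"
    and q: "invariant q" "q \<in> annihilator UNIV L"
  shows "(\<exists>v. c_reducing_element a v) \<or> (\<exists>n. rprinc (q ^ Suc n) \<subseteq> lprinc a)"
proof -
  have L_ideal: "left_ideal L" and "L \<noteq> UNIV" using L(1) by (auto simp: maximal_left_ideal_def)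
  have "rprinc (q ^ Suc n) \<subseteq> L" for n
    using q(2) by (auto simp: mem_rprinc annihilator_def mult.assoc)
  then have "rprinc (q ^ Suc n) + lprinc a \<subseteq> L" for n
    using L(2) by (auto elim!: set_plus_elim intro: left_ideal_add[OF L_ideal])
  with \<open>L \<noteq> UNIV\<close> show ?thesis using PID_fitting_cases[OF PID \<open>a \<noteq> 0\<close> q(1)] by blast
qed

lemma invariant_mem_annihilator_if_power:
  assumes JK: "simple_quotient J K" and p: "invariant p" and "rprinc (p ^ Suc n) \<subseteq> K"
  shows "p \<in> annihilator J K"
proof (rule invariant_power_mem_annihilator[OF JK p])
  show "p ^ Suc n \<in> annihilator J K"
    using \<open>rprinc (p ^ Suc n) \<subseteq> K\<close> by (auto simp: annihilator_def)
qed

lemma PID_bounded_annihilator: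
  assumes PID: "is_PID TYPE('a::ring_1_no_zero_divisors)" and JK: "simple_quotient J (K::'a set)"
    and I: "two_sided_ideal I" "I \<noteq> {0}" "I \<subseteq> K"
  shows "\<exists>p. p \<noteq> 0 \<and> invariant p \<and> annihilator J K = lprinc p"
proof -
  have J: "left_ideal J" and K: "left_ideal K" using JK by (auto simp: simple_quotient_def)
  obtain p where p: "invariant p" "annihilator J K = lprinc p"
    using PID_two_sided_ideal_invariant[OF PID left_ideal_annihilator[OF K] right_ideal_annihilator[OF J K]]
    by blast
  have "I \<subseteq> annihilator J K"
    using I(1,3) right_ideal_mult by (fastforce simp: annihilator_def two_sided_ideal_def)
  moreover have "0 \<in> I" using I(1) left_ideal_zero by (auto simp: two_sided_ideal_def)
  ultimately have "p \<noteq> 0" using p(2) I(2) by auto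
  with p show ?thesis by blast
qed

lemma bounded_elem_nonzero: "bounded_elem (a::'a::ring_1) \<Longrightarrow> a \<noteq> 0"
  unfolding bounded_elem_def two_sided_ideal_def by (auto dest: left_ideal_zero)

lemma lprinc_psubset_right_factor:
  fixes x y :: "'a::ring_1_no_zero_divisors"
  assumes "x * y \<noteq> 0" and "\<not> nc_unit x"
  shows "lprinc (x * y) \<subset> lprinc y"
proof
  show "lprinc (x * y) \<subseteq> lprinc y" by (simp add: lprinc_least left_ideal_lprinc)
  show "lprinc (x * y) \<noteq> lprinc y"
  proof
    assume "lprinc (x * y) = lprinc y"
    then obtain r where "y = r * (x * y)" using lprinc_self mem_lprinc by metis
    then have "1 * y = (r * x) * y" by (simp add: mult.assoc)
    with \<open>x * y \<noteq> 0\<close> have "r * x = 1" by (metis mult_cancel_right mult_zero_right)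
    with \<open>\<not> nc_unit x\<close> show False using nc_unit_if_left_inverse by blast
  qed
qed

lemma PID_same_annihilator_imp_c_reducing_element:
  fixes a :: "'a::ring_1_no_zero_divisors"
  assumes PID: "is_PID TYPE('a)" and L: "maximal_left_ideal L" "lprinc a \<subset> L"
    and T: "simple_quotient T (lprinc a)" "T \<noteq> UNIV"
    and same: "annihilator UNIV L = annihilator T (lprinc a)"
    and nonzero: "annihilator T (lprinc a) \<noteq> {0}"
  shows "\<exists>v. c_reducing_element a v"
proof -
  obtain v where v: "v \<in> T" "v \<notin> lprinc a" "\<forall>m\<in>L. m * v \<in> lprinc a"
    using PID_hom_from_maximal_left_ideal[OF PID L(1) T(1) same nonzero] by blast
  have "lprinc a \<subset> {r. r * v \<in> lprinc a}" using v(3) L(2) by auto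
  moreover have "r * v + s * a \<noteq> 1" for r s
  proof -
    have T_ideal: "left_ideal T" and "lprinc a \<subseteq> T" using T(1) by (auto simp: simple_quotient_def)
    then have "s * a \<in> T" using mult_mem_lprinc by blast
    then have "r * v + s * a \<in> T" by (rule left_ideal_add[OF T_ideal left_ideal_mult[OF T_ideal v(1)]])
    moreover have "1 \<notin> T" using T(2) left_ideal_eq_UNIV[OF T_ideal] by blast
    ultimately show ?thesis by auto
  qed
  ultimately show ?thesis using v(2) unfolding c_reducing_element_def by blast
qed

lemma PID_bounded_reducible_imp_c_reducing_element:
  fixes a x y :: "'a::ring_1_no_zero_divisors"
  assumes PID: "is_PID TYPE('a)" and bounded: "bounded_elem a" and a: "a = x * y"
    and "\<not> nc_unit x" and "\<not> nc_unit y"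
  shows "\<exists>v. c_reducing_element a v"
proof (rule ccontr)
  assume none: "\<nexists>v. c_reducing_element a v"
  obtain I where I: "two_sided_ideal I" "I \<noteq> {0}" "I \<subseteq> lprinc a"
    using bounded unfolding bounded_elem_def by blast
  have "a \<noteq> 0" by (rule bounded_elem_nonzero[OF bounded])
  have a_y: "lprinc a \<subset> lprinc y"
    using lprinc_psubset_right_factor \<open>a \<noteq> 0\<close> \<open>\<not> nc_unit x\<close> unfolding a by blast
  have "lprinc y \<noteq> UNIV" using \<open>\<not> nc_unit y\<close> lprinc_eq_UNIV_iff by blast
  then obtain L where L: "maximal_left_ideal L" "lprinc y \<subseteq> L"
    using PID_ex_maximal_left_ideal_above[OF PID left_ideal_lprinc] by blast
  have L_sq: "simple_quotient UNIV L" using L(1) by (simp add: simple_quotient_UNIV_iff)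
  have a_L: "lprinc a \<subset> L" using a_y L(2) by blast
  have "lprinc a \<noteq> {0}" using \<open>a \<noteq> 0\<close> lprinc_self by blast
  then obtain T where T: "simple_quotient T (lprinc a)" "T \<subseteq> lprinc y"
    using PID_ex_simple_quotient_above[OF PID left_ideal_lprinc _ left_ideal_lprinc a_y] by blast
  obtain p where p: "p \<noteq> 0" "invariant p" "annihilator T (lprinc a) = lprinc p"
    using PID_bounded_annihilator[OF PID T(1) I] by blast
  obtain q where q: "invariant q" "annihilator UNIV L = lprinc q"
    using PID_bounded_annihilator[OF PID L_sq I(1,2)] I(3) a_L by blast
  obtain n where "rprinc (p ^ Suc n) \<subseteq> lprinc a"
    using PID_fitting_cases_simple_quotient[OF PID \<open>a \<noteq> 0\<close> T(1) p(2)] p(3) none by auto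
  then have "p \<in> annihilator UNIV L"
    using invariant_mem_annihilator_if_power[OF L_sq p(2)] a_L by blast
  obtain m where "rprinc (q ^ Suc m) \<subseteq> lprinc a"
    using PID_fitting_cases_maximal_left_ideal[OF PID \<open>a \<noteq> 0\<close> L(1) psubset_imp_subset[OF a_L] q(1)]
      q(2) none by auto
  then have "q \<in> annihilator T (lprinc a)" by (rule invariant_mem_annihilator_if_power[OF T(1) q(1)])
  have "annihilator UNIV L = annihilator T (lprinc a)"
    using \<open>p \<in> annihilator UNIV L\<close> \<open>q \<in> annihilator T (lprinc a)\<close> p(3) q(2)
    by (metis left_ideal_lprinc lprinc_least subset_antisym)
  moreover have "T \<noteq> UNIV" using T(2) \<open>lprinc y \<noteq> UNIV\<close> by blast
  moreover have "annihilator T (lprinc a) \<noteq> {0}" using p(1,3) lprinc_self by blast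
  ultimately show False
    using PID_same_annihilator_imp_c_reducing_element[OF PID L(1) a_L T(1)] none by blast
qed

section \<open>Similarity and the main results\<close>

lemma lcoset_eq_iff: "lcoset b x = lcoset b y \<longleftrightarrow> x - y \<in> lprinc (b::'a::ring_1)"
proof
  have Lb: "left_ideal (lprinc b)" by (rule left_ideal_lprinc)
  assume "lcoset b x = lcoset b y"
  moreover have "x \<in> lcoset b x"
    unfolding lcoset_def using left_ideal_zero[OF Lb] by force
  ultimately show "x - y \<in> lprinc b" by (auto simp: lcoset_def)
next
  have Lb: "left_ideal (lprinc b)" by (rule left_ideal_lprinc)
  assume d: "x - y \<in> lprinc b"
  have "x + z \<in> lcoset b y" if "z \<in> lprinc b" for z
  proof -
    have "x + z = y + ((x - y) + z)" by simp
    then show ?thesis using left_ideal_add[OF Lb d that] unfolding lcoset_def by blast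
  qed
  moreover have "y + z \<in> lcoset b x" if "z \<in> lprinc b" for z
  proof -
    have "y + z = x + (z - (x - y))" by simp
    then show ?thesis using left_ideal_diff[OF Lb that d] unfolding lcoset_def by blast
  qed
  ultimately show "lcoset b x = lcoset b y" unfolding lcoset_def by blast
qed

lemma rmult_image_lcoset:
  assumes "\<And>r. r \<in> lprinc e \<Longrightarrow> r * s \<in> lprinc b"
  shows "(\<lambda>r. r * s) ` lcoset e x + lprinc b = lcoset b (x * s)"
proof
  have Lb: "left_ideal (lprinc b)" by (rule left_ideal_lprinc)
  show "(\<lambda>r. r * s) ` lcoset e x + lprinc b \<subseteq> lcoset b (x * s)"
  proof
    fix w assume "w \<in> (\<lambda>r. r * s) ` lcoset e x + lprinc b"
    then obtain m z where "m \<in> lprinc e" "z \<in> lprinc b" "w = x * s + (m * s + z)"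
      unfolding lcoset_def by (auto elim!: set_plus_elim simp: distrib_right add.assoc)
    then show "w \<in> lcoset b (x * s)"
      unfolding lcoset_def using assms left_ideal_add[OF Lb] by blast
  qed
  have "x \<in> lcoset e x" unfolding lcoset_def using left_ideal_zero[OF left_ideal_lprinc] by force
  then show "lcoset b (x * s) \<subseteq> (\<lambda>r. r * s) ` lcoset e x + lprinc b"
    unfolding lcoset_def by (auto intro!: set_plus_intro)
qed

text \<open>The isomorphism R/Re \<rightarrow> R/Rb, x + Re \<mapsto> xs + Rb, acting on cosets as sets.\<close>
lemma similarI_rmult:
  fixes b e s r0 :: "'a::ring_1"
  assumes ker: "\<And>r. r * s \<in> lprinc b \<longleftrightarrow> r \<in> lprinc e"
    and onto: "1 - r0 * s \<in> lprinc b"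
  shows "similar e b"
proof -
  have Lb: "left_ideal (lprinc b)" by (rule left_ideal_lprinc)
  define \<phi> where "\<phi> X = (\<lambda>r. r * s) ` X + lprinc b" for X
  have \<phi>: "\<phi> (lcoset e x) = lcoset b (x * s)" for x
    unfolding \<phi>_def using ker by (simp add: rmult_image_lcoset)
  have "inj_on \<phi> (range (lcoset e))"
  proof (rule inj_onI)
    fix X Y assume "X \<in> range (lcoset e)" "Y \<in> range (lcoset e)" and "\<phi> X = \<phi> Y"
    then obtain x y where X: "X = lcoset e x" and Y: "Y = lcoset e y" by blast
    with \<open>\<phi> X = \<phi> Y\<close> have "x * s - y * s \<in> lprinc b" by (simp add: \<phi> lcoset_eq_iff)
    then have "(x - y) * s \<in> lprinc b" by (simp add: left_diff_distrib)
    then show "X = Y" using ker by (simp add: X Y lcoset_eq_iff)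
  qed
  moreover have "\<phi> ` range (lcoset e) = range (lcoset b)"
  proof
    show "\<phi> ` range (lcoset e) \<subseteq> range (lcoset b)" using \<phi> by auto
    show "range (lcoset b) \<subseteq> \<phi> ` range (lcoset e)"
    proof
      fix Z assume "Z \<in> range (lcoset b)"
      then obtain u where Z: "Z = lcoset b u" by blast
      have "u - u * r0 * s = u * (1 - r0 * s)" by (simp add: algebra_simps)
      then have "lcoset b u = lcoset b (u * r0 * s)"
        using left_ideal_mult[OF Lb onto] by (simp add: lcoset_eq_iff)
      then show "Z \<in> \<phi> ` range (lcoset e)" using Z \<phi>[of "u * r0"] by auto
    qed
  qed
  ultimately have "bij_betw \<phi> (range (lcoset e)) (range (lcoset b))" by (simp add: bij_betw_def)
  moreover have "\<phi> (lcoset e (x + y)) = lcoset b (u + v)"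
    if "\<phi> (lcoset e x) = lcoset b u" "\<phi> (lcoset e y) = lcoset b v" for x y u v
  proof -
    have "(x * s - u) + (y * s - v) \<in> lprinc b"
      using that by (simp add: \<phi> lcoset_eq_iff left_ideal_add[OF Lb])
    then show ?thesis by (simp add: \<phi> lcoset_eq_iff algebra_simps)
  qed
  moreover have "\<phi> (lcoset e (r * x)) = lcoset b (r * u)" if "\<phi> (lcoset e x) = lcoset b u" for r x u
  proof -
    have "r * (x * s - u) \<in> lprinc b"
      using that by (simp add: \<phi> lcoset_eq_iff left_ideal_mult[OF Lb])
    then show ?thesis by (simp add: \<phi> lcoset_eq_iff algebra_simps)
  qed
  ultimately show ?thesis unfolding similar_def by (intro exI[of _ \<phi>] conjI allI impI)
qed

lemma similarI_cofactor:
  fixes e b g s t :: "'a::ring_1"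
  assumes ker: "\<And>r. r * g \<in> lprinc e \<longleftrightarrow> r \<in> lprinc b" and one: "s * g + t * e = 1"
  shows "similar e b"
proof (rule similarI_rmult)
  have Le: "left_ideal (lprinc e)" by (rule left_ideal_lprinc)
  fix r
  have "r * s * g = r - (r * t) * e"
    using one by (metis add_diff_cancel diff_add_cancel distrib_left mult.assoc mult.right_neutral)
  then have "r * s * g \<in> lprinc e \<longleftrightarrow> r \<in> lprinc e"
    using left_ideal_diff[OF Le _ mult_mem_lprinc] left_ideal_add[OF Le _ mult_mem_lprinc, of "r - r * t * e" "r * t"]
    by auto
  then show "r * s \<in> lprinc b \<longleftrightarrow> r \<in> lprinc e" using ker[of "r * s"] by simp
next
  have "(1 - g * s) * g = (g * t) * e"
    using one by (metis add_diff_cancel_left' mult.assoc mult.left_neutral mult.right_neutral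
        right_diff_distrib left_diff_distrib)
  then show "1 - g * s \<in> lprinc b" using ker by (metis mult_mem_lprinc)
qed

lemma cyclic_submodule_similar:
  fixes a d e g s t :: "'a::ring_1_no_zero_divisors"
  assumes "d \<noteq> 0" and a: "a = e * d" and v: "v = g * d" and d: "d = s * v + t * a"
    and ann: "{r. r * v \<in> lprinc a} = lprinc b"
  shows "similar e b"
proof (rule similarI_cofactor[where g = g and s = s and t = t])
  have "(s * g + t * e) * d = s * v + t * a" by (simp add: a v distrib_right mult.assoc)
  with d have "(s * g + t * e) * d = 1 * d" by simp
  with \<open>d \<noteq> 0\<close> show "s * g + t * e = 1" by (metis mult_cancel_right)
next
  fix r
  have "r * g \<in> lprinc e \<longleftrightarrow> (\<exists>k. r * g * d = k * e * d)"
    using \<open>d \<noteq> 0\<close> by (auto simp: mem_lprinc)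
  also have "\<dots> \<longleftrightarrow> r \<in> lprinc b"
    using ann by (auto simp: a v mem_lprinc mult.assoc)
  finally show "r * g \<in> lprinc e \<longleftrightarrow> r \<in> lprinc b" .
qed

lemma PID_c_reducing_element_imp_c_reducible:
  fixes a v :: "'a::ring_1_no_zero_divisors"
  assumes PID: "is_PID TYPE('a)" and "c_reducing_element a v"
  shows "c_reducible a"
proof -
  have v: "v \<notin> lprinc a" and ann: "lprinc a \<subset> {r. r * v \<in> lprinc a}"
    and proper: "\<nexists>r s. r * v + s * a = 1"
    using assms(2) unfolding c_reducing_element_def by blast+
  have "a \<noteq> 0" using v ann by auto
  obtain b where b: "{r. r * v \<in> lprinc a} = lprinc b"
    using PID_left_principal[OF PID left_ideal_vimage_rmult[OF left_ideal_lprinc]] by blast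
  obtain d where d: "lprinc v + lprinc a = lprinc d"
    using PID_left_principal[OF PID left_ideal_plus[OF left_ideal_lprinc left_ideal_lprinc]] by metis
  have "a \<in> lprinc d" "v \<in> lprinc d"
    unfolding d[symmetric] using set_plus_intro[OF _ lprinc_self] set_plus_intro[OF lprinc_self]
    by (metis add_0 mult_zero_left mult_mem_lprinc add_0_right)+
  then obtain e g where a_ed: "a = e * d" and v_gd: "v = g * d" by (auto simp: mem_lprinc)
  obtain s t where d_st: "d = s * v + t * a"
    using lprinc_self[of d] unfolding d[symmetric] by (auto elim!: set_plus_elim simp: mem_lprinc)
  have "a \<in> lprinc b" using ann lprinc_self[of a] unfolding b by blast
  then obtain c' where a_cb: "a = c' * b" by (auto simp: mem_lprinc)
  have "d \<noteq> 0" using \<open>a \<noteq> 0\<close> a_ed by auto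
  have "similar e b" by (rule cyclic_submodule_similar[OF \<open>d \<noteq> 0\<close> a_ed v_gd d_st b])
  moreover have "\<not> nc_unit e"
    using \<open>v \<in> lprinc d\<close> v lprinc_unit_mult a_ed by metis
  moreover have "\<not> nc_unit d"
  proof
    assume "nc_unit d"
    then have "1 \<in> lprinc v + lprinc a" using d lprinc_eq_UNIV_iff by blast
    with proper show False by (auto elim!: set_plus_elim simp: mem_lprinc)
  qed
  moreover have "\<not> nc_unit b"
  proof
    assume "nc_unit b"
    then have "1 \<in> {r. r * v \<in> lprinc a}" using b lprinc_eq_UNIV_iff by blast
    with v show False by simp
  qed
  moreover have "\<not> nc_unit c'"
  proof
    assume "nc_unit c'"
    then have "lprinc a = lprinc b" using a_cb lprinc_unit_mult by simp
    with ann b show False by blast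
  qed
  ultimately show ?thesis unfolding c_reducible_def using \<open>a \<noteq> 0\<close> a_ed a_cb by blast
qed

lemma c_reducing_element_not_completely_prime:
  "c_reducing_element a v \<Longrightarrow> \<not> completely_prime (lprinc a)"
  unfolding c_reducing_element_def completely_prime_def by blast

lemma maximal_left_ideal_imp_completely_prime:
  assumes "maximal_left_ideal P"
  shows "completely_prime P"
  unfolding completely_prime_def
proof (intro conjI allI impI)
  have P: "simple_quotient UNIV P" using assms by (simp add: simple_quotient_UNIV_iff)
  then have P_ideal: "left_ideal P" by (simp add: simple_quotient_def)
  show "P \<noteq> UNIV" using assms by (simp add: maximal_left_ideal_def)
  fix x b assume xb: "x * b \<in> P \<and> {y * b |y. y \<in> P} \<subseteq> P"
  show "x \<in> P \<or> b \<in> P"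
  proof (cases "x \<in> P")
    case False
    then have "lprinc x + P = UNIV"
      using simple_quotient_plus_eq[OF P left_ideal_lprinc] lprinc_self by blast
    then obtain r p where p: "p \<in> P" and one: "1 = r * x + p"
      by (metis UNIV_I mem_lprinc set_plus_elim)
    then have "r * (x * b) + p * b = b" by (metis distrib_right mult.assoc mult_1)
    moreover have "r * (x * b) + p * b \<in> P"
      using xb p by (blast intro: left_ideal_add[OF P_ideal] left_ideal_mult[OF P_ideal])
    ultimately show ?thesis by simp
  qed simp
qed

lemma PID_nc_irreducible_imp_maximal:
  fixes a :: "'a::ring_1_no_zero_divisors"
  assumes PID: "is_PID TYPE('a)" and irr: "nc_irreducible a"
  shows "maximal_left_ideal (lprinc a)"
  unfolding maximal_left_ideal_def
proof (intro conjI allI impI)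
  show "left_ideal (lprinc a)" by (rule left_ideal_lprinc)
  show "lprinc a \<noteq> UNIV" using irr lprinc_eq_UNIV_iff unfolding nc_irreducible_def by blast
  fix J assume J: "left_ideal J \<and> lprinc a \<subseteq> J"
  then obtain c where c: "J = lprinc c" using PID_left_principal[OF PID] by blast
  then obtain d where "a = d * c" using J lprinc_self mem_lprinc by blast
  with irr have "nc_unit d \<or> nc_unit c" unfolding nc_irreducible_def by blast
  then show "J = lprinc a \<or> J = UNIV"
    using \<open>a = d * c\<close> c J lprinc_unit_mult lprinc_eq_UNIV_iff by blast
qed

lemma bounded_PID_reducible_imp_c_reducing_element:
  fixes a :: "'a::ring_1_no_zero_divisors"
  assumes "bounded_PID TYPE('a)" and "a \<noteq> 0" "\<not> nc_unit a" "\<not> nc_irreducible a"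
  shows "\<exists>v. c_reducing_element a v"
proof -
  obtain x y where "a = x * y" "\<not> nc_unit x" "\<not> nc_unit y"
    using assms(3,4) unfolding nc_irreducible_def by blast
  moreover have "is_PID TYPE('a)" "bounded_elem a"
    using assms(1-3) unfolding bounded_PID_def by blast+
  ultimately show ?thesis using PID_bounded_reducible_imp_c_reducing_element by blast
qed

lemma bounded_PID_c_irreducible_iff:
  fixes a :: "'a::ring_1_no_zero_divisors"
  assumes "bounded_PID TYPE('a)" and "a \<noteq> 0" "\<not> nc_unit a"
  shows "c_irreducible a \<longleftrightarrow> nc_irreducible a"
proof
  assume "c_irreducible a"
  then show "nc_irreducible a"
    using bounded_PID_reducible_imp_c_reducing_element[OF assms] PID_c_reducing_element_imp_c_reducible
      assms(1) unfolding c_irreducible_def bounded_PID_def by blast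
next
  assume "nc_irreducible a"
  then show "c_irreducible a"
    using \<open>a \<noteq> 0\<close> unfolding c_irreducible_def c_reducible_def nc_irreducible_def by blast
qed

lemma bounded_PID_completely_prime_iff:
  fixes P :: "'a::ring_1_no_zero_divisors set"
  assumes bounded: "bounded_PID TYPE('a)" and "left_ideal P" "P \<noteq> {0}"
  shows "completely_prime P \<longleftrightarrow> maximal_left_ideal P"
proof
  assume prime: "completely_prime P"
  have PID: "is_PID TYPE('a)" using bounded unfolding bounded_PID_def by blast
  then obtain a where a: "P = lprinc a" using PID_left_principal \<open>left_ideal P\<close> by blast
  with \<open>P \<noteq> {0}\<close> have "a \<noteq> 0" by auto
  moreover have "\<not> nc_unit a" using prime a lprinc_eq_UNIV_iff unfolding completely_prime_def by blast
  ultimately have "nc_irreducible a"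
    using bounded_PID_reducible_imp_c_reducing_element[OF bounded] c_reducing_element_not_completely_prime
      prime a by blast
  then show "maximal_left_ideal P" using PID_nc_irreducible_imp_maximal[OF PID] a by blast
qed (rule maximal_left_ideal_imp_completely_prime)

theorem corollary3p8:
  assumes "bounded_PID TYPE('a::ring_1_no_zero_divisors)"
  shows "(\<forall>a::'a. a \<noteq> 0 \<and> \<not> nc_unit a \<longrightarrow> (c_irreducible a \<longleftrightarrow> nc_irreducible a))
       \<and> (\<forall>P::'a set. left_ideal P \<and> P \<noteq> {0} \<longrightarrow> (completely_prime P \<longleftrightarrow> maximal_left_ideal P))"
  using bounded_PID_c_irreducible_iff[OF assms] bounded_PID_completely_prime_iff[OF assms] by blast

end
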